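(* Let $q=2^f\geq 4$ and $I=\{0,\ f,\ 2f/\gcd(3,f),\ 4f/\gcd(3,f)\}$. Let $b\in\mathbb{F}_{q^2}^\times$ with $b+b^q=1$ and $b^{q+1}\neq 1$, and let $a\in\mathbb{F}_{q^2}^\times$ have order $q+1$ and satisfy: $(1+b+b^2)^{2^i}\neq a+a^{-1}+1$ for all $i\in I$; $(1+b+b^2)^{2^i}\neq a(1+b+b^3+b^4)+a^{-1}(b^2+b^3+b^4)$ for all $i\in I$; $a+a^{-1}+1\neq a(1+b+b^3+b^4)+a^{-1}(b^2+b^3+b^4)$; and $a+a^{-1}+1\neq 0$. Let \[ X=\begin{pmatrix}b&1&1\\ b^q&0&1\\ b^{q+1}&b&b^q\end{pmatrix},\quad Y=\begin{pmatrix}ab+a^{-1}b^q&0&a(b+b^{q+1})+a^{-1}(b^q+b^{q+1})\\ 0&1&0\\ a+a^{-1}&0&ab+a^{-1}b^q\end{pmatrix},\quad Z=\begin{pmatrix}1&0&1\\ 0&1&0\\ 0&0&1\end{pmatrix}, \] which lie in $\mathrm{SU}_3(q)$, and let $x,y,z$ be their images under the natural projection $\eta:\mathrm{SU}_3(q)\to\mathrm{PSU}_3(q)$. Then $x,y,z$ each have order $2$, and $zy$ has order $q+1$.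
   Context: Here $\mathrm{SU}_3(q)=\{A\in\mathrm{SL}_3(q^2): \overline{A}^{T}WA=W\}$, where $\overline{(a_{ij})}=(a_{ij}^q)$ and $W=\begin{pmatrix}0&0&1\\0&1&0\\1&0&0\end{pmatrix}$, and $\mathrm{PSU}_3(q)=\mathrm{SU}_3(q)/Z(\mathrm{SU}_3(q))$. *)

theory Defs
  imports "HOL-Analysis.Analysis" "HOL-Algebra.Multiplicative_Group"
begin

text \<open>Matrices over a field F_{q^2} are elements of 'a^3^3; A$i$j is the entry in row i, column j.\<close>

definition conjm :: "nat \<Rightarrow> 'a::field^3^3 \<Rightarrow> 'a^3^3" where
  "conjm q A = (\<chi> i j. (A$i$j) ^ q)"

definition Wmat :: "'a::field^3^3" where
  "Wmat = vector [vector [0,0,1], vector [0,1,0], vector [1,0,0]]"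

text \<open>SU_3(q) inside SL_3(q^2) (the field type is F_{q^2}).\<close>
definition SU3 :: "nat \<Rightarrow> ('a::field^3^3) set" where
  "SU3 q = {A. det A = 1 \<and> transpose (conjm q A) ** Wmat ** A = Wmat}"

definition SU_grp :: "nat \<Rightarrow> ('a::field^3^3) monoid" where
  "SU_grp q = \<lparr>carrier = SU3 q, mult = (**), one = mat 1\<rparr>"

definition grp_center :: "('b, 'c) monoid_scheme \<Rightarrow> 'b set" where
  "grp_center G = {z \<in> carrier G. \<forall>g \<in> carrier G. z \<otimes>\<^bsub>G\<^esub> g = g \<otimes>\<^bsub>G\<^esub> z}"

definition PSU :: "nat \<Rightarrow> ('a::field^3^3) set monoid" where
  "PSU q = SU_grp q Mod grp_center (SU_grp q)"

definition eta :: "nat \<Rightarrow> 'a::field^3^3 \<Rightarrow> ('a^3^3) set" where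
  "eta q A = grp_center (SU_grp q) #>\<^bsub>SU_grp q\<^esub> A"

definition mult_order :: "'a::field \<Rightarrow> nat" where
  "mult_order a = (LEAST n. 0 < n \<and> a ^ n = 1)"

end

theory Submission
  imports Defs "HOL-Computational_Algebra.Primes"
begin

text \<open>
  In characteristic 2 the map \<open>x \<mapsto> x\<^sup>q\<close> is additive, so \<open>SU\<^sub>3(q)\<close> is a group, and
  with \<open>b\<^sup>q = 1 + b\<close>, \<open>a\<^sup>q = a\<^sup>-\<^sup>1\<close> the membership of \<open>X\<close>, \<open>Y\<close>, \<open>Z\<close> is a direct computation.
  All three are involutions, \<open>Z\<close> commutes with neither \<open>X\<close> nor \<open>Y\<close>, so their images in
  \<open>PSU\<^sub>3(q)\<close> have order 2.

  \<open>Z\<close>, \<open>Y\<close> and \<open>ZY\<close> fix \<open>e\<^sub>2\<close> and act on \<open>\<langle>e\<^sub>1, e\<^sub>3\<rangle>\<close> by a \<open>2 \<times> 2\<close> block. For \<open>ZY\<close> this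
  block has determinant 1 and trace \<open>a + a\<^sup>-\<^sup>1\<close>, so its \<open>n\<close>-th power is expressed through
  \<open>U\<^sub>n = (a\<^sup>n - a\<^sup>-\<^sup>n) / (a - a\<^sup>-\<^sup>1)\<close>: it commutes with \<open>Z\<close> only if \<open>U\<^sub>n = 0\<close>, i.e.
  \<open>a\<^sup>2\<^sup>n = 1\<close>, and it is the identity when \<open>a\<^sup>n = 1\<close>. As \<open>a\<close> has odd order \<open>q + 1\<close>, the image
  of \<open>ZY\<close> has order exactly \<open>q + 1\<close>.
\<close>

section \<open>Finite fields of characteristic two\<close>

lemma finite_field_power_card_minus_one:
  fixes x :: "'a::{field,finite}"
  assumes "x \<noteq> 0"
  shows "x ^ (CARD('a) - 1) = 1"
proof -
  let ?U = "UNIV - {0::'a}"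
  have "bij_betw ((*) x) ?U ?U"
    by (rule bij_betwI[where g = "(*) (inverse x)"]) (use assms in auto)
  then have "(\<Prod>y\<in>?U. x * y) = \<Prod>?U"
    using prod.reindex_bij_betw[of "(*) x" ?U ?U id] by simp
  moreover have "(\<Prod>y\<in>?U. x * y) = x ^ card ?U * \<Prod>?U"
    by (simp add: prod.distrib)
  ultimately show ?thesis
    by (simp add: card_Diff_singleton)
qed

lemma CHAR_eq_2_if_card_eq_power_of_2:
  assumes "CARD('a::{field,finite}) = 2 ^ k" and "k > 0"
  shows "CHAR('a) = 2"
proof -
  have "odd (CARD('a) - 1)"
    using assms by simp
  then have "(-1::'a) = 1"
    using finite_field_power_card_minus_one[of "-1::'a"] by simp
  then have "of_nat 2 = (0::'a)"
    by (metis add_eq_0_iff2 of_nat_numeral one_add_one)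
  then have "CHAR('a) dvd 2"
    by (simp only: of_nat_eq_0_iff_char_dvd)
  then show ?thesis
    by (metis CHAR_not_1' One_nat_def prime_nat_iff two_is_prime_nat)
qed

lemma mult_order_dvd_iff:
  fixes x :: "'a::{field,finite}"
  assumes "x \<noteq> 0"
  shows "x ^ n = 1 \<longleftrightarrow> mult_order x dvd n"
proof -
  let ?P = "\<lambda>n. 0 < n \<and> x ^ n = 1" and ?m = "mult_order x"
  have "2 \<le> CARD('a)"
    using card_mono[of UNIV "{0::'a, 1}"] by simp
  then have "?P (CARD('a) - 1)"
    using finite_field_power_card_minus_one[OF assms] by simp
  then have m: "0 < ?m" "x ^ ?m = 1"
    unfolding mult_order_def by (metis (mono_tags, lifting) LeastI)+
  have "x ^ n = x ^ (n mod ?m)"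
    by (metis m(2) mult_div_mod_eq power_add power_mult power_one mult_1)
  moreover have "x ^ (n mod ?m) \<noteq> 1" if "n mod ?m \<noteq> 0"
  proof
    assume "x ^ (n mod ?m) = 1"
    then have "?m \<le> n mod ?m"
      using that Least_le[of ?P] unfolding mult_order_def by blast
    then show False
      using mod_less_divisor[OF m(1), of n] by simp
  qed
  ultimately show ?thesis
    by (auto simp: dvd_eq_mod_eq_0)
qed

lemma neq_inverse_if_mult_order_gt_2:
  fixes a :: "'a::{field,finite}"
  assumes "a \<noteq> 0" and "mult_order a > 2"
  shows "a \<noteq> inverse a"
proof
  assume "a = inverse a"
  then have "a ^ 2 = 1"
    using \<open>a \<noteq> 0\<close> by (metis power2_eq_square right_inverse)
  then show False
    using mult_order_dvd_iff[OF \<open>a \<noteq> 0\<close>, of 2] \<open>mult_order a > 2\<close> by (auto dest: dvd_imp_le)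
qed

lemma CHAR_2_simps:
  assumes "CHAR('a::ring_1) = 2"
  shows "(x::'a) + x = 0" and "x + (x + y) = y" and "x + y = 0 \<longleftrightarrow> x = y"
    and "(numeral (Num.Bit0 n) :: 'a) = 0" and "(numeral (Num.Bit1 n) :: 'a) = 1"
proof -
  have add_eq_0: "z + w = 0 \<longleftrightarrow> z = w" for z w :: 'a
    using uminus_CHAR_2[OF assms, of w] by (simp add: add_eq_0_iff2)
  then show "x + y = 0 \<longleftrightarrow> x = y" .
  have self: "z + z = 0" for z :: 'a
    by (simp add: add_eq_0)
  then show "x + x = 0" and "x + (x + y) = y"
    by (simp_all flip: add.assoc)
  show "(numeral (Num.Bit0 n) :: 'a) = 0" and "(numeral (Num.Bit1 n) :: 'a) = 1"
    by (simp_all only: numeral_Bit0 numeral_Bit1 self add_0)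
qed

section \<open>Element orders modulo the centre\<close>

lemma grp_center_normal:
  fixes G (structure)
  assumes "group G"
  shows "grp_center G \<lhd> G"
proof -
  interpret group G by fact
  have "subgroup (grp_center G) G"
  proof (rule subgroupI)
    fix z assume "z \<in> grp_center G"
    then have z: "z \<in> carrier G" "\<And>g. g \<in> carrier G \<Longrightarrow> z \<otimes> g = g \<otimes> z"
      by (auto simp: grp_center_def)
    have "inv z \<otimes> g = g \<otimes> inv z" if "g \<in> carrier G" for g
      using z(2)[of "inv g"] that z(1) by (metis inv_closed inv_inv inv_mult_group)
    with z(1) show "inv z \<in> grp_center G"
      by (simp add: grp_center_def)
  next
    fix y z assume "y \<in> grp_center G" "z \<in> grp_center G"
    then have y: "y \<in> carrier G" "\<And>g. g \<in> carrier G \<Longrightarrow> y \<otimes> g = g \<otimes> y"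
      and z: "z \<in> carrier G" "\<And>g. g \<in> carrier G \<Longrightarrow> z \<otimes> g = g \<otimes> z"
      by (auto simp: grp_center_def)
    have "y \<otimes> z \<otimes> g = g \<otimes> (y \<otimes> z)" if g: "g \<in> carrier G" for g
    proof -
      have "y \<otimes> z \<otimes> g = y \<otimes> (g \<otimes> z)"
        using y(1) z g by (simp add: m_assoc)
      also have "\<dots> = y \<otimes> g \<otimes> z"
        using y(1) z(1) g by (simp add: m_assoc)
      also have "\<dots> = g \<otimes> (y \<otimes> z)"
        using y z(1) g by (simp add: m_assoc)
      finally show ?thesis .
    qed
    with y(1) z(1) show "y \<otimes> z \<in> grp_center G"
      by (simp add: grp_center_def)
  qed (auto simp: grp_center_def)
  moreover have "x \<otimes> z \<otimes> inv x = z" if "x \<in> carrier G" "z \<in> grp_center G" for x z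
  proof -
    have "x \<otimes> z = z \<otimes> x" "z \<in> carrier G"
      using that by (auto simp: grp_center_def)
    with that(1) show ?thesis
      by (simp add: m_assoc)
  qed
  ultimately show ?thesis
    by (auto simp: normal_inv_iff)
qed

lemma (in normal) rcos_carrier_FactGroup:
  "x \<in> carrier G \<Longrightarrow> H #> x \<in> carrier (G Mod H)"
  by (simp add: carrier_FactGroup)

lemma (in normal) FactGroup_pow_rcos_eq_H_iff:
  assumes "x \<in> carrier G"
  shows "(H #> x) [^]\<^bsub>G Mod H\<^esub> (n::nat) = H \<longleftrightarrow> x [^] n \<in> H"
proof -
  have "x [^] n \<in> carrier G"
    using assms by simp
  then show ?thesis
    using coset_join1[OF _ _ subgroup_axioms] coset_join2[OF _ subgroup_axioms]
    by (auto simp: FactGroup_pow[OF assms])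
qed

lemma (in normal) ord_FactGroup_rcos_eq_iff:
  assumes "x \<in> carrier G"
  shows "group.ord (G Mod H) (H #> x) = d \<longleftrightarrow> (\<forall>n. x [^] n \<in> H \<longleftrightarrow> d dvd n)"
  using group.ord_unique[OF factorgroup_is_group rcos_carrier_FactGroup[OF assms]]
  by (simp add: FactGroup_pow_rcos_eq_H_iff[OF assms])

lemma (in normal) ord_FactGroup_rcos_eq_2:
  assumes "x \<in> carrier G" and "x \<otimes> x \<in> H" and "x \<notin> H"
  shows "group.ord (G Mod H) (H #> x) = 2"
proof -
  let ?ord = "group.ord (G Mod H) (H #> x)"
  have "?ord dvd n \<longleftrightarrow> x [^] n \<in> H" for n
    using group.pow_eq_id[OF factorgroup_is_group rcos_carrier_FactGroup[OF assms(1)]]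
    by (simp add: FactGroup_pow_rcos_eq_H_iff[OF assms(1)])
  from this[of 2] this[of 1] have "?ord dvd 2" "\<not> ?ord dvd 1"
    using assms by (simp_all add: numeral_2_eq_2)
  then show ?thesis
    by (metis nat_dvd_1_iff_1 prime_nat_iff two_is_prime_nat)
qed

section \<open>The group SU_3(q)\<close>

lemma conjm_matrix_mult:
  assumes "prime CHAR('a::field)" and "q = CHAR('a) ^ f"
  shows "conjm q (A ** B :: 'a^3^3) = conjm q A ** conjm q B"
  unfolding conjm_def matrix_matrix_mult_def
  by (simp add: freshmans_dream_sum'[OF assms] power_mult_distrib)

lemma conjm_mat_1:
  assumes "q > 0"
  shows "conjm q (mat 1 :: 'a::field^3^3) = mat 1"
  unfolding conjm_def mat_def using assms by (simp add: vec_eq_iff)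

lemma conjm_vector:
  "conjm q (vector [vector [x11, x12, x13], vector [x21, x22, x23], vector [x31, x32, x33]]) =
    (vector [vector [x11 ^ q, x12 ^ q, x13 ^ q], vector [x21 ^ q, x22 ^ q, x23 ^ q],
      vector [x31 ^ q, x32 ^ q, x33 ^ q]] :: 'a::field^3^3)"
  by (simp add: conjm_def vec_eq_iff forall_3)

lemma Wmat_mult_Wmat: "(Wmat :: 'a::field^3^3) ** Wmat = mat 1"
  unfolding Wmat_def matrix_matrix_mult_def mat_def
  by (simp add: vec_eq_iff forall_3 sum_3)

lemma unitary_Wmat_mult:
  assumes "prime CHAR('a::field)" and "q = CHAR('a) ^ f"
    and "transpose (conjm q A) ** Wmat ** A = Wmat"
    and "transpose (conjm q B) ** Wmat ** B = (Wmat :: 'a^3^3)"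
  shows "transpose (conjm q (A ** B)) ** Wmat ** (A ** B) = Wmat"
proof -
  have "transpose (conjm q (A ** B)) ** Wmat ** (A ** B)
      = transpose (conjm q B) ** (transpose (conjm q A) ** Wmat ** A) ** B"
    by (simp add: conjm_matrix_mult[OF assms(1,2)] matrix_transpose_mul matrix_mul_assoc)
  then show ?thesis
    using assms(3,4) by simp
qed

lemma SU_grp_simps:
  "carrier (SU_grp q) = SU3 q" "A \<otimes>\<^bsub>SU_grp q\<^esub> B = A ** B" "\<one>\<^bsub>SU_grp q\<^esub> = mat 1"
  by (simp_all add: SU_grp_def)

lemma group_SU_grp:
  assumes "prime CHAR('a::field)" and "q = CHAR('a) ^ f"
  shows "group (SU_grp q :: ('a^3^3) monoid)"
proof (rule groupI)
  show "\<one>\<^bsub>SU_grp q\<^esub> \<in> carrier (SU_grp q)"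
    using assms by (simp add: SU_grp_simps SU3_def conjm_mat_1 prime_gt_0_nat)
next
  fix A B :: "'a^3^3"
  assume "A \<in> carrier (SU_grp q)" "B \<in> carrier (SU_grp q)"
  then show "A \<otimes>\<^bsub>SU_grp q\<^esub> B \<in> carrier (SU_grp q)"
    using unitary_Wmat_mult[OF assms] by (simp add: SU_grp_simps SU3_def det_mul)
next
  fix A B C :: "'a^3^3"
  show "A \<otimes>\<^bsub>SU_grp q\<^esub> B \<otimes>\<^bsub>SU_grp q\<^esub> C = A \<otimes>\<^bsub>SU_grp q\<^esub> (B \<otimes>\<^bsub>SU_grp q\<^esub> C)"
    by (simp add: SU_grp_simps matrix_mul_assoc)
next
  fix A :: "'a^3^3"
  show "\<one>\<^bsub>SU_grp q\<^esub> \<otimes>\<^bsub>SU_grp q\<^esub> A = A"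
    by (simp add: SU_grp_simps)
  assume A: "A \<in> carrier (SU_grp q)"
  then have det: "det A = 1" and unitary: "transpose (conjm q A) ** Wmat ** A = Wmat"
    by (auto simp: SU_grp_simps SU3_def)
  define B where "B = Wmat ** transpose (conjm q A) ** Wmat"
  have BA: "B ** A = mat 1"
    unfolding B_def using unitary by (metis Wmat_mult_Wmat matrix_mul_assoc)
  then have "A ** B = mat 1"
    using matrix_left_right_inverse by blast
  moreover have "det B = 1"
    using det BA by (metis det_I det_mul mult.right_neutral)
  moreover have "transpose (conjm q B) ** Wmat ** B = Wmat"
  proof -
    have "transpose (conjm q B) ** Wmat ** B
        = transpose (conjm q B) ** (transpose (conjm q A) ** Wmat ** A) ** B"
      using unitary by simp
    also have "\<dots> = transpose (conjm q (A ** B)) ** Wmat ** (A ** B)"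
      by (simp add: conjm_matrix_mult[OF assms] matrix_transpose_mul matrix_mul_assoc)
    also have "\<dots> = Wmat"
      using \<open>A ** B = mat 1\<close> assms by (simp add: conjm_mat_1 prime_gt_0_nat)
    finally show ?thesis .
  qed
  ultimately show "\<exists>B\<in>carrier (SU_grp q). B \<otimes>\<^bsub>SU_grp q\<^esub> A = \<one>\<^bsub>SU_grp q\<^esub>"
    using BA by (auto simp: SU_grp_simps SU3_def)
qed

primrec matpow :: "'a::semiring_1^'n^'n \<Rightarrow> nat \<Rightarrow> 'a^'n^'n" where
  "matpow A 0 = mat 1"
| "matpow A (Suc n) = matpow A n ** A"

lemma SU_grp_pow: "A [^]\<^bsub>SU_grp q\<^esub> (n::nat) = matpow A n"
  by (induction n) (simp_all add: SU_grp_def)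

lemma mat_1_in_grp_center_SU_grp:
  assumes "group (SU_grp q :: ('a::field^3^3) monoid)"
  shows "(mat 1 :: 'a^3^3) \<in> grp_center (SU_grp q)"
  using monoid.one_closed[OF group.is_monoid[OF assms]] by (simp add: grp_center_def SU_grp_simps)

lemma eta_mult:
  assumes "group (SU_grp q :: ('a::field^3^3) monoid)" and "A \<in> SU3 q" and "B \<in> SU3 q"
  shows "eta q A \<otimes>\<^bsub>PSU q\<^esub> eta q B = eta q (A ** B :: 'a^3^3)"
proof -
  interpret normal "grp_center (SU_grp q)" "SU_grp q :: ('a^3^3) monoid"
    by (rule grp_center_normal[OF assms(1)])
  show ?thesis
    using hom_mult[OF r_coset_hom_Mod] assms(2,3)
    by (simp add: PSU_def eta_def SU_grp_simps)
qed

lemma ord_eta_eq_iff: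
  assumes "group (SU_grp q :: ('a::field^3^3) monoid)" and "A \<in> SU3 q"
  shows "group.ord (PSU q) (eta q (A :: 'a^3^3)) = d
    \<longleftrightarrow> (\<forall>n. matpow A n \<in> grp_center (SU_grp q) \<longleftrightarrow> d dvd n)"
proof -
  interpret normal "grp_center (SU_grp q)" "SU_grp q :: ('a^3^3) monoid"
    by (rule grp_center_normal[OF assms(1)])
  show ?thesis
    using ord_FactGroup_rcos_eq_iff assms(2)
    by (simp add: PSU_def eta_def SU_grp_simps SU_grp_pow)
qed

lemma ord_eta_eq_2:
  assumes "group (SU_grp q :: ('a::field^3^3) monoid)"
    and "A \<in> SU3 q" and "A ** A = mat 1" and "B \<in> SU3 q" and "A ** B \<noteq> B ** (A :: 'a^3^3)"
  shows "group.ord (PSU q) (eta q A) = 2"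
proof -
  interpret normal "grp_center (SU_grp q)" "SU_grp q :: ('a^3^3) monoid"
    by (rule grp_center_normal[OF assms(1)])
  have "A \<notin> grp_center (SU_grp q)"
    using assms(4,5) by (auto simp: grp_center_def SU_grp_simps)
  then have "group.ord (SU_grp q Mod grp_center (SU_grp q))
      (grp_center (SU_grp q) #>\<^bsub>SU_grp q\<^esub> A) = 2"
    using assms(2,3) mat_1_in_grp_center_SU_grp[OF assms(1)]
    by (intro ord_FactGroup_rcos_eq_2) (simp_all add: SU_grp_simps)
  then show ?thesis
    by (simp add: PSU_def eta_def)
qed

section \<open>Matrices fixing the second basis vector\<close>

definition block13 :: "'a::zero_neq_one \<Rightarrow> 'a \<Rightarrow> 'a \<Rightarrow> 'a \<Rightarrow> 'a^3^3" where
  "block13 p c k r = vector [vector [p, 0, c], vector [0, 1, 0], vector [k, 0, r]]"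

lemma block13_eq_iff:
  "block13 p c k r = block13 p' c' k' r' \<longleftrightarrow> p = p' \<and> c = c' \<and> k = k' \<and> r = r'"
  by (auto simp: block13_def vec_eq_iff forall_3)

lemma block13_mult:
  "block13 p c k r ** block13 p' c' k' r' =
     block13 (p * p' + c * k') (p * c' + c * r') (k * p' + r * k') (k * c' + r * r')"
  by (simp add: block13_def matrix_matrix_mult_def vec_eq_iff forall_3 sum_3)

lemma mat_1_eq_block13: "(mat 1 :: 'a::semiring_1^3^3) = block13 1 0 0 1"
  by (simp add: block13_def mat_def vec_eq_iff forall_3)

lemma Wmat_eq_block13: "Wmat = block13 0 1 1 0"
  by (simp add: block13_def Wmat_def)

lemma transpose_block13: "transpose (block13 p c k r) = block13 p k c r"
  by (simp add: block13_def transpose_def vec_eq_iff forall_3)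

lemma det_block13: "det (block13 p c k r :: 'a::comm_ring_1^3^3) = p * r - c * k"
  by (simp add: block13_def det_3)

lemma conjm_block13:
  "q > 0 \<Longrightarrow> conjm q (block13 p c k r) = block13 (p ^ q) (c ^ q) (k ^ q) (r ^ q)"
  by (simp add: block13_def conjm_def vec_eq_iff forall_3)

lemma block13_in_SU3_iff:
  assumes "q > 0"
  shows "block13 p c k r \<in> SU3 q \<longleftrightarrow> p * r - c * k = 1
    \<and> k ^ q * p + p ^ q * k = 0 \<and> k ^ q * c + p ^ q * r = 1
    \<and> r ^ q * p + c ^ q * k = 1 \<and> r ^ q * c + c ^ q * r = 0"
  using assms
  by (simp add: SU3_def det_block13 conjm_block13 transpose_block13 Wmat_eq_block13
      block13_mult block13_eq_iff)

lemma block13_in_SU3_iff_det: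
  fixes p c k r :: "'a::field"
  assumes char: "CHAR('a) = 2" and "q > 0"
    and "p ^ q = p" "c ^ q = c" "k ^ q = k" "r ^ q = r"
  shows "block13 p c k r \<in> SU3 q \<longleftrightarrow> p * r - c * k = 1"
  using assms
  by (simp add: block13_in_SU3_iff CHAR_2_simps[OF char] minus_CHAR_2[OF char] ac_simps)

lemma block13_involution:
  assumes "CHAR('a::field) = 2" and "det (block13 p c k p :: 'a^3^3) = 1"
  shows "block13 p c k p ** block13 p c k p = mat 1"
  using assms
  by (simp add: det_block13 block13_mult mat_1_eq_block13 block13_eq_iff minus_CHAR_2
      CHAR_2_simps ac_simps flip: distrib_left)

text \<open>The Lucas sequence \<open>U\<^sub>n(t, 1)\<close>, i.e. the Chebyshev polynomials of the second kind
  evaluated at \<open>t/2\<close>. By Cayley-Hamilton, a \<open>2 \<times> 2\<close> matrix \<open>M\<close> of determinant 1 and trace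
  \<open>t\<close> satisfies \<open>M\<^sup>n\<^sup>+\<^sup>1 = U\<^sub>n\<^sub>+\<^sub>1 M - U\<^sub>n I\<close>.\<close>

fun lucas_U :: "'a::comm_ring_1 \<Rightarrow> nat \<Rightarrow> 'a" where
  "lucas_U t 0 = 0"
| "lucas_U t (Suc 0) = 1"
| "lucas_U t (Suc (Suc n)) = t * lucas_U t (Suc n) - lucas_U t n"

lemma lucas_U_closed_form:
  fixes a c :: "'a::comm_ring_1"
  assumes "a * c = 1"
  shows "(a - c) * lucas_U (a + c) n = a ^ n - c ^ n"
proof (induction "a + c" n rule: lucas_U.induct)
  case (3 n)
  have cancel: "a * c ^ Suc n = c ^ n" "c * a ^ Suc n = a ^ n"
    using assms by (simp_all add: mult.assoc[symmetric] mult.commute[of c a])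
  have "(a - c) * lucas_U (a + c) (Suc (Suc n))
      = (a + c) * ((a - c) * lucas_U (a + c) (Suc n)) - (a - c) * lucas_U (a + c) n"
    by (simp add: algebra_simps)
  also have "\<dots> = (a + c) * (a ^ Suc n - c ^ Suc n) - (a ^ n - c ^ n)"
    using 3 by simp
  also have "\<dots> = a ^ Suc (Suc n) - c ^ Suc (Suc n)"
    using cancel by (simp add: algebra_simps)
  finally show ?case .
qed simp_all

lemma lucas_U_eq_0_iff:
  fixes a :: "'a::field"
  assumes "a \<noteq> 0" and "a \<noteq> inverse a"
  shows "lucas_U (a + inverse a) n = 0 \<longleftrightarrow> a ^ (2 * n) = 1"
proof -
  have "(a - inverse a) * lucas_U (a + inverse a) n = a ^ n - inverse a ^ n"
    using assms(1) by (simp add: lucas_U_closed_form)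
  then have "lucas_U (a + inverse a) n = 0 \<longleftrightarrow> a ^ n = inverse (a ^ n)"
    using assms(2) by (auto simp: power_inverse)
  also have "\<dots> \<longleftrightarrow> a ^ n * a ^ n = 1"
    using assms(1) by (auto simp: field_simps)
  also have "\<dots> \<longleftrightarrow> a ^ (2 * n) = 1"
    by (simp add: mult_2 power_add)
  finally show ?thesis .
qed

lemma matpow_block13:
  fixes p c k r :: "'a::comm_ring_1"
  assumes "p * r - c * k = 1"
  shows "matpow (block13 p c k r) (Suc n) =
    block13 (lucas_U (p + r) (Suc n) * p - lucas_U (p + r) n) (lucas_U (p + r) (Suc n) * c)
      (lucas_U (p + r) (Suc n) * k) (lucas_U (p + r) (Suc n) * r - lucas_U (p + r) n)"
proof (induction n)
  case 0
  then show ?case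
    by (simp add: mat_1_eq_block13 block13_mult)
next
  case (Suc n)
  have ck: "c * k = p * r - 1" and kc: "k * c = p * r - 1"
    using assms by (simp_all add: algebra_simps)
  show ?case
    unfolding matpow.simps(2)[of _ "Suc n"] Suc.IH
    by (simp only: block13_mult block13_eq_iff mult.assoc ck kc) (simp add: algebra_simps)
qed

definition matX :: "nat \<Rightarrow> 'a::field \<Rightarrow> 'a^3^3" where
  "matX q b = vector [vector [b, 1, 1], vector [b ^ q, 0, 1], vector [b ^ (q + 1), b, b ^ q]]"

definition matY :: "nat \<Rightarrow> 'a::field \<Rightarrow> 'a \<Rightarrow> 'a^3^3" where
  "matY q a b = block13 (a * b + inverse a * b ^ q)
     (a * (b + b ^ (q + 1)) + inverse a * (b ^ q + b ^ (q + 1))) (a + inverse a)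
     (a * b + inverse a * b ^ q)"

definition matZ :: "'a::field^3^3" where
  "matZ = block13 1 1 0 1"

lemma matX_in_SU3:
  fixes b :: "'a::field"
  assumes char: "CHAR('a) = 2" and q: "q = 2 ^ f" and bq: "b ^ q = 1 + b"
  shows "matX q b \<in> SU3 q"
proof -
  have frob: "(x + y) ^ q = x ^ q + y ^ q" for x y :: 'a
    using freshmans_dream'[of q f x y] char q by simp
  have "q > 0"
    using q by simp
  show ?thesis
    unfolding SU3_def matX_def using \<open>q > 0\<close>
    by (simp add: conjm_vector det_3 power_add bq frob zero_power Wmat_def
        matrix_matrix_mult_def transpose_def vec_eq_iff forall_3 sum_3 algebra_simps
        CHAR_2_simps[OF char] minus_CHAR_2[OF char])
qed

lemma matX_squared:
  fixes b :: "'a::field"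
  assumes char: "CHAR('a) = 2" and bq: "b ^ q = 1 + b"
  shows "matX q b ** matX q b = mat 1"
  unfolding matX_def
  by (simp add: power_add bq mat_def matrix_matrix_mult_def vec_eq_iff forall_3 sum_3
      algebra_simps CHAR_2_simps[OF char])

lemma matX_matZ_not_commute:
  fixes b :: "'a::field"
  assumes "b \<noteq> 0"
  shows "matX q b ** matZ \<noteq> matZ ** matX q b"
proof
  assume "matX q b ** matZ = matZ ** matX q b"
  then have "(matX q b ** matZ) $ 1 $ 1 = (matZ ** matX q b) $ 1 $ 1"
    by simp
  then show False
    using assms by (simp add: matX_def matZ_def block13_def matrix_matrix_mult_def sum_3)
qed

lemma matZ_in_SU3:
  assumes "CHAR('a::field) = 2" and "q > 0"
  shows "(matZ :: 'a^3^3) \<in> SU3 q"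
  unfolding matZ_def using assms by (simp add: block13_in_SU3_iff_det)

lemma matZ_squared:
  assumes "CHAR('a::field) = 2"
  shows "(matZ :: 'a^3^3) ** matZ = mat 1"
  by (simp add: matZ_def block13_mult mat_1_eq_block13 CHAR_2_simps[OF assms])

lemma block13_commute_matZ_iff:
  "block13 p c k r ** matZ = matZ ** block13 p c k r \<longleftrightarrow> k = 0 \<and> p = r"
  by (auto simp: matZ_def block13_mult block13_eq_iff ac_simps)

lemma det_matY:
  fixes a b :: "'a::field"
  assumes char: "CHAR('a) = 2" and bq: "b ^ q = 1 + b" and "a \<noteq> 0"
  shows "det (matY q a b) = 1"
  unfolding matY_def det_block13 using \<open>a \<noteq> 0\<close>
  by (simp add: power_add bq field_simps) (simp add: algebra_simps CHAR_2_simps[OF char])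

lemma matY_in_SU3:
  fixes a b :: "'a::field"
  assumes char: "CHAR('a) = 2" and q: "q = 2 ^ f" and bq: "b ^ q = 1 + b"
    and a: "a ^ (q + 1) = 1"
  shows "matY q a b \<in> SU3 q"
proof -
  have "a \<noteq> 0"
    using a by auto
  have aq: "a ^ q = inverse a"
    using a by (simp add: inverse_unique)
  have frob: "(x + y) ^ q = x ^ q + y ^ q" for x y :: 'a
    using freshmans_dream'[of q f x y] char q by simp
  have "q > 0"
    using q by simp
  define P C K where "P = a * b + inverse a * (1 + b)"
    and "C = a * b * b + inverse a * (1 + b * b)" and "K = a + inverse a"
  have "matY q a b = block13 P C K P"
    by (simp add: matY_def P_def C_def K_def power_add bq algebra_simps CHAR_2_simps[OF char])
  moreover have "P ^ q = P" "C ^ q = C" "K ^ q = K"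
    unfolding P_def C_def K_def
    by (simp_all add: frob bq aq power_inverse algebra_simps CHAR_2_simps[OF char])
  ultimately show ?thesis
    using det_matY[OF char bq \<open>a \<noteq> 0\<close>] \<open>q > 0\<close>
    by (simp add: block13_in_SU3_iff_det[OF char] det_block13)
qed

lemma matY_squared:
  fixes a b :: "'a::field"
  assumes char: "CHAR('a) = 2" and bq: "b ^ q = 1 + b" and "a \<noteq> 0"
  shows "matY q a b ** matY q a b = mat 1"
  using det_matY[OF assms] unfolding matY_def by (rule block13_involution[OF char])

lemma matY_matZ_not_commute:
  fixes a b :: "'a::field"
  assumes char: "CHAR('a) = 2" and "a \<noteq> inverse a"
  shows "matY q a b ** matZ \<noteq> matZ ** matY q a b"
  using assms unfolding matY_def by (simp add: block13_commute_matZ_iff CHAR_2_simps[OF char])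

lemma matZ_mult_matY:
  fixes a b :: "'a::field"
  assumes char: "CHAR('a) = 2" and bq: "b ^ q = 1 + b" and "a \<noteq> 0"
  obtains p c r where "matZ ** matY q a b = block13 p c (a + inverse a) r"
    and "p * r - c * (a + inverse a) = 1" and "p + r = a + inverse a"
proof -
  define P C K where "P = a * b + inverse a * b ^ q"
    and "C = a * (b + b ^ (q + 1)) + inverse a * (b ^ q + b ^ (q + 1))" and "K = a + inverse a"
  have ZY: "matZ ** matY q a b = block13 (P + K) (C + P) K P"
    by (simp add: matZ_def matY_def P_def C_def K_def block13_mult)
  have "det (matZ ** matY q a b) = 1"
    using det_matY[OF char bq \<open>a \<noteq> 0\<close>] by (simp add: det_mul matZ_def det_block13)
  then have "(P + K) * P - (C + P) * K = 1"
    by (simp add: ZY det_block13)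
  moreover have "P + K + P = K"
    by (simp add: ac_simps CHAR_2_simps[OF char])
  ultimately show ?thesis
    using ZY that unfolding K_def by blast
qed

lemma matpow_block13_commute_matZ_iff:
  fixes a :: "'a::field"
  assumes det: "p * r - c * k = 1" and trace: "p + r = a + inverse a"
    and "a \<noteq> 0" and "a \<noteq> inverse a" and "k \<noteq> 0"
  shows "matpow (block13 p c k r) n ** matZ = matZ ** matpow (block13 p c k r) n
    \<longleftrightarrow> a ^ (2 * n) = 1"
proof (cases n)
  case 0
  then show ?thesis
    by (simp add: mat_1_eq_block13 block13_commute_matZ_iff)
next
  case (Suc m)
  show ?thesis
    unfolding Suc matpow_block13[OF det] trace block13_commute_matZ_iff
    using lucas_U_eq_0_iff[OF assms(3,4), of "Suc m"] \<open>k \<noteq> 0\<close> by auto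
qed

lemma matpow_block13_eq_mat_1:
  fixes a :: "'a::field"
  assumes det: "p * r - c * k = 1" and trace: "p + r = a + inverse a"
    and "a \<noteq> inverse a" and "a ^ n = 1"
  shows "matpow (block13 p c k r) n = mat 1"
proof (cases n)
  case 0
  then show ?thesis
    by simp
next
  case (Suc m)
  have "a \<noteq> 0"
    using \<open>a ^ n = 1\<close> Suc by auto
  have am: "a ^ m = inverse a"
    using \<open>a ^ n = 1\<close> Suc by (simp add: inverse_unique)
  have "(a - inverse a) * lucas_U (a + inverse a) n = (a - inverse a) * 0"
    using \<open>a ^ n = 1\<close> \<open>a \<noteq> 0\<close> by (simp add: lucas_U_closed_form power_inverse)
  moreover have "(a - inverse a) * lucas_U (a + inverse a) m = (a - inverse a) * -1"
    using am \<open>a \<noteq> 0\<close> by (simp add: lucas_U_closed_form power_inverse)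
  ultimately have "lucas_U (a + inverse a) n = 0" "lucas_U (a + inverse a) m = -1"
    using \<open>a \<noteq> inverse a\<close> by (simp_all only: mult_cancel_left right_minus_eq simp_thms)
  then show ?thesis
    unfolding Suc matpow_block13[OF det] trace by (simp add: mat_1_eq_block13)
qed

lemma ord_eta_matZ_matY:
  fixes a b :: "'a::{field,finite}"
  assumes char: "CHAR('a) = 2" and q: "q = 2 ^ f" "f > 0" and bq: "b ^ q = 1 + b"
    and "a \<noteq> 0" and "mult_order a = q + 1"
  shows "group.ord (PSU q) (eta q (matZ ** matY q a b)) = q + 1"
proof -
  have grp: "group (SU_grp q :: ('a^3^3) monoid)"
    by (rule group_SU_grp[of _ f]) (simp_all add: char q)
  have "1 < q"
    using q one_less_power[of "2::nat" f] by simp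
  have a_pow: "a ^ n = 1 \<longleftrightarrow> (q + 1) dvd n" for n
    using mult_order_dvd_iff[OF \<open>a \<noteq> 0\<close>] \<open>mult_order a = q + 1\<close> by simp
  have "a \<noteq> inverse a"
    using neq_inverse_if_mult_order_gt_2[OF \<open>a \<noteq> 0\<close>] \<open>mult_order a = q + 1\<close> \<open>1 < q\<close>
    by simp
  then have "a + inverse a \<noteq> 0"
    by (simp add: CHAR_2_simps[OF char])
  obtain p c r where ZY: "matZ ** matY q a b = block13 p c (a + inverse a) r"
    and det: "p * r - c * (a + inverse a) = 1" and trace: "p + r = a + inverse a"
    using matZ_mult_matY[OF char bq \<open>a \<noteq> 0\<close>] .
  have Z: "(matZ :: 'a^3^3) \<in> SU3 q"
    using matZ_in_SU3[OF char] \<open>1 < q\<close> by simp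
  have "block13 p c (a + inverse a) r \<in> SU3 q"
    using monoid.m_closed[OF group.is_monoid[OF grp]] Z matY_in_SU3[OF char q(1) bq]
      a_pow[of "q + 1"] by (simp add: SU_grp_simps flip: ZY)
  moreover have "matpow (block13 p c (a + inverse a) r) n \<in> grp_center (SU_grp q)
      \<longleftrightarrow> (q + 1) dvd n" for n
  proof
    assume "matpow (block13 p c (a + inverse a) r) n \<in> grp_center (SU_grp q)"
    then have "a ^ (2 * n) = 1"
      using Z matpow_block13_commute_matZ_iff[OF det trace \<open>a \<noteq> 0\<close> \<open>a \<noteq> inverse a\<close>
          \<open>a + inverse a \<noteq> 0\<close>]
      by (auto simp: grp_center_def SU_grp_simps)
    moreover have "coprime (q + 1) 2"
      using q by simp
    ultimately show "(q + 1) dvd n"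
      by (simp add: a_pow coprime_dvd_mult_right_iff)
  next
    assume "(q + 1) dvd n"
    then show "matpow (block13 p c (a + inverse a) r) n \<in> grp_center (SU_grp q)"
      using matpow_block13_eq_mat_1[OF det trace \<open>a \<noteq> inverse a\<close>] a_pow
        mat_1_in_grp_center_SU_grp[OF grp] by simp
  qed
  ultimately show ?thesis
    unfolding ZY by (simp add: ord_eta_eq_iff[OF grp])
qed

theorem lemma3p3:
  fixes f q :: nat and a b :: "'a::{field,finite}"
    and X Y Z :: "'a^3^3"
  assumes hq: "q = 2 ^ f" and hq4: "q \<ge> 4"
    and hcard: "CARD('a) = q ^ 2"
    and hI: "I = {0, f, 2 * f div gcd 3 f, 4 * f div gcd 3 f}"
    and hb0: "b \<noteq> 0" and hb1: "b + b ^ q = 1" and hb2: "b ^ (q + 1) \<noteq> 1"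
    and ha0: "a \<noteq> 0" and haord: "mult_order a = q + 1"
    and h1: "\<forall>i\<in>I. (1 + b + b^2) ^ (2 ^ i) \<noteq> a + inverse a + 1"
    and h2: "\<forall>i\<in>I. (1 + b + b^2) ^ (2 ^ i) \<noteq>
               a * (1 + b + b^3 + b^4) + inverse a * (b^2 + b^3 + b^4)"
    and h3: "a + inverse a + 1 \<noteq> a * (1 + b + b^3 + b^4) + inverse a * (b^2 + b^3 + b^4)"
    and h4: "a + inverse a + 1 \<noteq> 0"
    and hX: "X = vector [vector [b, 1, 1], vector [b ^ q, 0, 1], vector [b ^ (q + 1), b, b ^ q]]"
    and hY: "Y = vector [vector [a * b + inverse a * b ^ q, 0,
                                 a * (b + b ^ (q + 1)) + inverse a * (b ^ q + b ^ (q + 1))],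
                         vector [0, 1, 0],
                         vector [a + inverse a, 0, a * b + inverse a * b ^ q]]"
    and hZ: "Z = vector [vector [1, 0, 1], vector [0, 1, 0], vector [0, 0, 1]]"
  shows "X \<in> SU3 q \<and> Y \<in> SU3 q \<and> Z \<in> SU3 q
         \<and> group.ord (PSU q) (eta q X) = 2
         \<and> group.ord (PSU q) (eta q Y) = 2
         \<and> group.ord (PSU q) (eta q Z) = 2
         \<and> group.ord (PSU q) (eta q Z \<otimes>\<^bsub>PSU q\<^esub> eta q Y) = q + 1"
proof -
  have "f > 0"
    using hq hq4 by (cases f) simp_all
  have char: "CHAR('a) = 2"
    using CHAR_eq_2_if_card_eq_power_of_2[of "f * 2"] hcard hq \<open>f > 0\<close> by (simp add: power_mult)
  have bq: "b ^ q = 1 + b"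
    using hb1 char by (metis add_diff_cancel_left' minus_CHAR_2)
  have grp: "group (SU_grp q :: ('a^3^3) monoid)"
    by (rule group_SU_grp[of _ f]) (simp_all add: char hq)
  have "a ^ (q + 1) = 1" and "a \<noteq> inverse a"
    using mult_order_dvd_iff[OF ha0, of "q + 1"] neq_inverse_if_mult_order_gt_2[OF ha0] haord hq4
    by simp_all
  have matrices: "X = matX q b" "Y = matY q a b" "Z = matZ"
    by (simp_all add: hX hY hZ matX_def matY_def matZ_def block13_def)
  have SU: "matX q b \<in> SU3 q" "matY q a b \<in> SU3 q" "(matZ :: 'a^3^3) \<in> SU3 q"
    using matX_in_SU3[OF char hq bq] matY_in_SU3[OF char hq bq \<open>a ^ (q + 1) = 1\<close>]
      matZ_in_SU3[OF char] hq by simp_all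
  have "group.ord (PSU q) (eta q (matX q b)) = 2"
    using SU matX_squared[OF char bq] matX_matZ_not_commute[OF hb0] by (intro ord_eta_eq_2[OF grp])
  moreover have "group.ord (PSU q) (eta q (matY q a b)) = 2"
    using SU matY_squared[OF char bq ha0] matY_matZ_not_commute[OF char \<open>a \<noteq> inverse a\<close>]
    by (intro ord_eta_eq_2[OF grp])
  moreover have "group.ord (PSU q) (eta q (matZ :: 'a^3^3)) = 2"
    using SU matZ_squared[OF char] matX_matZ_not_commute[OF hb0, of q] by (intro ord_eta_eq_2[OF grp]) auto
  moreover have "eta q matZ \<otimes>\<^bsub>PSU q\<^esub> eta q (matY q a b) = eta q (matZ ** matY q a b)"
    using SU by (intro eta_mult[OF grp])
  ultimately show ?thesis
    using SU ord_eta_matZ_matY[OF char hq \<open>f > 0\<close> bq ha0 haord] unfolding matrices by simp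
qed

end
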